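(* Let $\Delta:M_n\to M_n$ be a weak-2-local derivation which is symmetric, i.e. $\Delta(a^* )^*=\Delta(a)$ for all $a\in M_n$. Let $p_1,\ldots,p_n$ be mutually orthogonal minimal projections in $M_n$ and $q=1-p_n$. If $\Delta(p_j)=0$ for every $j=1,\ldots,n$, then $q\Delta(qaq)p_n=0=p_n\Delta(qaq)q$ for every $a\in M_n$.
   Context: $M_n=M_n(\mathbb{C})$. A derivation on $M_n$ is a linear map $D$ with $D(ab)=D(a)b+aD(b)$. A (not necessarily linear) map $\Delta:M_n\to M_n$ is a weak-2-local derivation if for every $a,b\in M_n$ and every $\phi\in M_n^*$ there exists a derivation $D_{a,b,\phi}$ such that $\phi\Delta(a)=\phi D_{a,b,\phi}(a)$ and $\phi\Delta(b)=\phi D_{a,b,\phi}(b)$. *)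

theory Defs
  imports "HOL-Analysis.Analysis"
begin

type_synonym 'n cmat = "complex ^ 'n ^ 'n"

definition cscale :: "complex \<Rightarrow> 'n::finite cmat \<Rightarrow> 'n cmat" where
  "cscale c A = (\<chi> i j. c * A $ i $ j)"

definition cadj :: "'n::finite cmat \<Rightarrow> 'n cmat" where
  "cadj A = (\<chi> i j. cnj (A $ j $ i))"

definition clinear_mat_map :: "('n::finite cmat \<Rightarrow> 'n cmat) \<Rightarrow> bool" where
  "clinear_mat_map f \<longleftrightarrow> (\<forall>x y. f (x + y) = f x + f y) \<and> (\<forall>c x. f (cscale c x) = cscale c (f x))"

definition clinear_functional :: "('n::finite cmat \<Rightarrow> complex) \<Rightarrow> bool" where
  "clinear_functional \<phi> \<longleftrightarrow> (\<forall>x y. \<phi> (x + y) = \<phi> x + \<phi> y) \<and> (\<forall>c x. \<phi> (cscale c x) = c * \<phi> x)"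

definition is_derivation :: "('n::finite cmat \<Rightarrow> 'n cmat) \<Rightarrow> bool" where
  "is_derivation D \<longleftrightarrow> clinear_mat_map D \<and> (\<forall>a b. D (a ** b) = D a ** b + a ** D b)"

definition weak_2_local_derivation :: "('n::finite cmat \<Rightarrow> 'n cmat) \<Rightarrow> bool" where
  "weak_2_local_derivation \<Delta> \<longleftrightarrow>
     (\<forall>a b \<phi>. clinear_functional \<phi> \<longrightarrow>
        (\<exists>D. is_derivation D \<and> \<phi> (\<Delta> a) = \<phi> (D a) \<and> \<phi> (\<Delta> b) = \<phi> (D b)))"

definition is_projection :: "'n::finite cmat \<Rightarrow> bool" where
  "is_projection p \<longleftrightarrow> cadj p = p \<and> p ** p = p"

text \<open>Minimal projection: nonzero, and no projection strictly between 0 and p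
  (e \<le> p for projections means e = e p).\<close>
definition minimal_projection :: "'n::finite cmat \<Rightarrow> bool" where
  "minimal_projection p \<longleftrightarrow> is_projection p \<and> p \<noteq> 0 \<and>
     (\<forall>e. is_projection e \<and> e ** p = e \<longrightarrow> e = 0 \<or> e = p)"

end

theory Submission
  imports Defs
begin

text \<open>Every derivation of \<open>M\<^sub>n\<close> is inner, so each instance of weak-2-locality says that
  \<open>\<phi>(\<Delta> a) = \<phi>(d a - a d)\<close> and \<open>\<phi>(\<Delta> b) = \<phi>(d b - b d)\<close> for one matrix \<open>d\<close>. Mutually
  orthogonal minimal projections are \<open>p\<^sub>j = u\<^sub>j u\<^sub>j\<^sup>*\<close> for an orthonormal basis, and conjugating
  by the unitary with columns \<open>u\<^sub>j\<close> reduces to matrix units \<open>p\<^sub>j = E\<^sub>j\<^sub>j\<close>. There, \<open>\<Delta>(E\<^sub>j\<^sub>j) = 0\<close>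
  together with single-entry functionals forces \<open>\<Delta>\<close> to vanish on diagonal matrices. If the
  \<open>m\<close>-th column of \<open>x\<close> is zero, testing against \<open>\<phi>(y) = \<Sigma>\<^sub>j \<alpha>\<^sub>j\<^sup>* y\<^sub>j\<^sub>m\<close> with all \<open>\<alpha>\<^sub>j \<noteq> 0\<close>, paired with a
  suitable diagonal matrix, gives \<open>\<phi>(\<Delta> x) = 0\<close>; varying \<open>\<alpha>\<close> shows that the \<open>m\<close>-th column of
  \<open>\<Delta> x\<close> is zero. Hence \<open>x p\<^sub>m = 0\<close> implies \<open>\<Delta>(x) p\<^sub>m = 0\<close>, and by symmetry \<open>p\<^sub>m x = 0\<close> implies
  \<open>p\<^sub>m \<Delta>(x) = 0\<close>; both apply to \<open>x = qaq\<close>.\<close>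

definition matrix_unit :: "'n::finite \<Rightarrow> 'n \<Rightarrow> 'n cmat" where
  "matrix_unit i j = (\<chi> r s. if r = i \<and> s = j then 1 else 0)"

lemma matrix_mult_entry: "(A ** B) $ i $ j = (\<Sum>k\<in>UNIV. A $ i $ k * B $ k $ j)"
  by (simp add: matrix_matrix_mult_def)

lemma cscale_entry [simp]: "cscale c A $ i $ j = c * A $ i $ j"
  by (simp add: cscale_def)

lemma cadj_entry [simp]: "cadj A $ i $ j = cnj (A $ j $ i)"
  by (simp add: cadj_def)

lemma matrix_unit_entry [simp]:
  "matrix_unit i j $ r $ s = (if r = i then (if s = j then 1 else 0) else 0)"
  by (simp add: matrix_unit_def)

lemma mult_if_zero: "a * (if P then b else 0) = (if P then a * b else (0::complex))"
  by simp

lemma if_zero_mult: "(if P then b else 0) * a = (if P then b * a else (0::complex))"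
  by simp

lemma matrix_mult_matrix_unit_right:
  "(A ** matrix_unit k l) $ i $ j = (if j = l then A $ i $ k else 0)"
  by (simp add: matrix_mult_entry mult_if_zero sum.delta')

lemma matrix_mult_matrix_unit_left:
  "(matrix_unit k l ** A) $ i $ j = (if i = k then A $ l $ j else 0)"
  by (cases "i = k") (simp_all add: matrix_mult_entry if_zero_mult sum.delta)

lemma matrix_unit_mult:
  "matrix_unit i j ** matrix_unit k l = (if j = k then matrix_unit i l else 0)"
  by (simp add: vec_eq_iff matrix_mult_matrix_unit_right)

lemma sum_diagonal_matrix_units: "(\<Sum>k\<in>UNIV. matrix_unit k k) = (mat 1 :: 'n::finite cmat)"
  by (auto simp: vec_eq_iff mat_def)

lemma matrix_add_rdistrib: "(A + B) ** C = A ** C + B ** (C::'n::finite cmat)"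
  by (simp add: vec_eq_iff matrix_mult_entry distrib_right sum.distrib)

lemma matrix_diff_rdistrib: "(A - B) ** C = A ** C - B ** (C::'n::finite cmat)"
  by (simp add: vec_eq_iff matrix_mult_entry left_diff_distrib sum_subtractf)

lemma matrix_diff_ldistrib: "C ** (A - B) = C ** A - C ** (B::'n::finite cmat)"
  by (simp add: vec_eq_iff matrix_mult_entry right_diff_distrib sum_subtractf)

lemma cscale_matrix_mult_left: "cscale c A ** B = cscale c (A ** (B::'n::finite cmat))"
  by (simp add: vec_eq_iff matrix_mult_entry sum_distrib_left mult.assoc)

lemma cscale_matrix_mult_right: "A ** cscale c B = cscale c (A ** (B::'n::finite cmat))"
  by (simp add: vec_eq_iff matrix_mult_entry sum_distrib_left mult.left_commute)

lemma matrix_mult_sum_left: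
  "(\<Sum>k\<in>S. f k) ** (B::'n::finite cmat) = (\<Sum>k\<in>S. f k ** B)"
  by (induct S rule: infinite_finite_induct) (auto simp: matrix_add_rdistrib)

lemma matrix_mult_sum_right:
  "(B::'n::finite cmat) ** (\<Sum>k\<in>S. f k) = (\<Sum>k\<in>S. B ** f k)"
  by (induct S rule: infinite_finite_induct) (auto simp: matrix_add_ldistrib)

lemma cadj_mult: "cadj (A ** B) = cadj B ** cadj (A::'n::finite cmat)"
  by (simp add: vec_eq_iff matrix_mult_entry mult.commute)

lemma cadj_cadj [simp]: "cadj (cadj A) = A"
  by (simp add: vec_eq_iff)

lemma cadj_zero [simp]: "cadj (0 :: 'n::finite cmat) = 0"
  by (simp add: vec_eq_iff)

subsection \<open>Derivations are inner\<close>

lemma clinear_mat_map_sum: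
  assumes "clinear_mat_map h"
  shows "h (\<Sum>k\<in>S. f k) = (\<Sum>k\<in>S. h (f k))"
proof -
  have "h 0 = 0"
    using assms unfolding clinear_mat_map_def by (metis add_cancel_right_right add_0)
  then show ?thesis
    using assms by (induct S rule: infinite_finite_induct) (auto simp: clinear_mat_map_def)
qed

lemma matrix_unit_expansion:
  "a = (\<Sum>i\<in>UNIV. \<Sum>j\<in>UNIV. cscale (a $ i $ j) (matrix_unit i j))"
proof -
  have "(\<Sum>i\<in>UNIV. \<Sum>j\<in>UNIV. cscale (a $ i $ j) (matrix_unit i j)) $ r $ s = a $ r $ s" for r s
  proof -
    have "(\<Sum>i\<in>UNIV. \<Sum>j\<in>UNIV. cscale (a $ i $ j) (matrix_unit i j)) $ r $ s
        = (\<Sum>i\<in>UNIV. \<Sum>j\<in>UNIV. a $ i $ j * (if r = i then (if s = j then 1 else 0) else 0))"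
      by simp
    also have "\<dots> = (\<Sum>i\<in>UNIV. if r = i then a $ i $ s else 0)"
      by (rule sum.cong) (auto simp: mult_if_zero sum.delta)
    finally show ?thesis by simp
  qed
  then show ?thesis by (simp add: vec_eq_iff)
qed

lemma clinear_mat_map_eqI:
  assumes "clinear_mat_map f" "clinear_mat_map g"
    and "\<And>i j. f (matrix_unit i j) = g (matrix_unit i j)"
  shows "f a = g a"
proof -
  have expand: "h a = (\<Sum>i\<in>UNIV. \<Sum>j\<in>UNIV. cscale (a $ i $ j) (h (matrix_unit i j)))"
    if "clinear_mat_map h" for h :: "'a cmat \<Rightarrow> 'a cmat"
    using that by (subst matrix_unit_expansion)
      (simp add: clinear_mat_map_sum clinear_mat_map_def)
  show ?thesis
    using assms by (simp add: expand)
qed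

lemma derivation_add: "is_derivation D \<Longrightarrow> D (a + b) = D a + D b"
  by (simp add: is_derivation_def clinear_mat_map_def)

lemma derivation_cscale: "is_derivation D \<Longrightarrow> D (cscale c a) = cscale c (D a)"
  by (simp add: is_derivation_def clinear_mat_map_def)

lemma derivation_mult: "is_derivation D \<Longrightarrow> D (a ** b) = D a ** b + a ** D b"
  by (simp add: is_derivation_def)

lemma derivation_zero: "is_derivation D \<Longrightarrow> D 0 = 0"
  using derivation_add[of D 0 0] by simp

lemma clinear_mat_map_commutator: "clinear_mat_map (\<lambda>a. d ** a - a ** d)"
  by (simp add: clinear_mat_map_def matrix_add_ldistrib matrix_add_rdistrib
      cscale_matrix_mult_left cscale_matrix_mult_right)
    (simp add: vec_eq_iff algebra_simps)

lemma derivation_inner: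
  assumes D: "is_derivation D"
  shows "\<exists>d. \<forall>a. D a = d ** a - a ** d"
proof -
  fix i0 :: 'a
  define d where "d = (\<Sum>k\<in>UNIV. D (matrix_unit k i0) ** matrix_unit i0 k)"
  have d_right: "d ** matrix_unit i j = D (matrix_unit i i0) ** matrix_unit i0 j" for i j
    by (simp add: d_def matrix_mult_sum_left matrix_mul_assoc[symmetric] matrix_unit_mult
        sum.delta' if_distrib[of "\<lambda>B. _ ** B"] cong: if_cong)
  have Leibniz: "matrix_unit i j ** D (matrix_unit k i0)
      = (if j = k then D (matrix_unit i i0) else 0) - D (matrix_unit i j) ** matrix_unit k i0"
    for i j k
  proof -
    have "matrix_unit i j ** D (matrix_unit k i0)
        = D (matrix_unit i j ** matrix_unit k i0) - D (matrix_unit i j) ** matrix_unit k i0"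
      using derivation_mult[OF D, of "matrix_unit i j" "matrix_unit k i0"] by simp
    then show ?thesis
      by (cases "j = k") (simp_all add: matrix_unit_mult derivation_zero[OF D])
  qed
  have d_left: "matrix_unit i j ** d
      = D (matrix_unit i i0) ** matrix_unit i0 j - D (matrix_unit i j)" for i j
  proof -
    have "matrix_unit i j ** d
        = (\<Sum>k\<in>UNIV. (if j = k then D (matrix_unit i i0) ** matrix_unit i0 k else 0)
            - D (matrix_unit i j) ** (matrix_unit k i0 ** matrix_unit i0 k))"
      by (simp add: d_def matrix_mult_sum_right matrix_mul_assoc Leibniz matrix_diff_rdistrib
          if_distrib[of "\<lambda>B. B ** _"] cong: if_cong)
    also have "\<dots> = D (matrix_unit i i0) ** matrix_unit i0 j - D (matrix_unit i j)"
      by (simp add: sum_subtractf matrix_mult_sum_right[symmetric] matrix_unit_mult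
          sum_diagonal_matrix_units)
    finally show ?thesis .
  qed
  have "D a = d ** a - a ** d" for a
    by (rule clinear_mat_map_eqI[OF _ clinear_mat_map_commutator])
      (use D d_right d_left in \<open>auto simp: is_derivation_def\<close>)
  then show ?thesis by blast
qed

lemma weak_2_local_derivation_inner:
  assumes "weak_2_local_derivation \<Delta>" "clinear_functional \<phi>"
  shows "\<exists>d. \<phi> (\<Delta> a) = \<phi> (d ** a - a ** d) \<and> \<phi> (\<Delta> b) = \<phi> (d ** b - b ** d)"
proof -
  obtain D where D: "is_derivation D" "\<phi> (\<Delta> a) = \<phi> (D a)" "\<phi> (\<Delta> b) = \<phi> (D b)"
    using assms unfolding weak_2_local_derivation_def by blast
  then show ?thesis
    using derivation_inner[OF D(1)] by metis
qed

subsection \<open>Weak-2-local derivations vanishing on the diagonal matrix units\<close>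

definition diag_mat :: "('n::finite \<Rightarrow> complex) \<Rightarrow> 'n cmat" where
  "diag_mat \<mu> = (\<chi> r s. if r = s then \<mu> r else 0)"

lemma matrix_mult_diag_mat_right: "(A ** diag_mat \<mu>) $ i $ j = A $ i $ j * \<mu> j"
  by (simp add: diag_mat_def matrix_mult_entry mult_if_zero sum.delta')

lemma matrix_mult_diag_mat_left: "(diag_mat \<mu> ** A) $ i $ j = \<mu> i * A $ i $ j"
  by (simp add: diag_mat_def matrix_mult_entry if_zero_mult sum.delta)

lemma clinear_functional_entry: "clinear_functional (\<lambda>y. y $ k $ l)"
  by (simp add: clinear_functional_def)

lemma clinear_functional_weighted_column:
  "clinear_functional (\<lambda>y. \<Sum>j\<in>UNIV. cnj (\<alpha> j) * y $ j $ m)"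
  by (simp add: clinear_functional_def sum.distrib sum_distrib_left distrib_left mult.left_commute)

lemma weak_2_local_derivation_diag_mat_zero:
  assumes w: "weak_2_local_derivation \<Delta>" and units: "\<forall>j. \<Delta> (matrix_unit j j) = 0"
  shows "\<Delta> (diag_mat \<mu>) = 0"
proof -
  have "\<Delta> (diag_mat \<mu>) $ k $ l = 0" for k l
  proof -
    obtain d where
      d: "\<Delta> (diag_mat \<mu>) $ k $ l = (d ** diag_mat \<mu> - diag_mat \<mu> ** d) $ k $ l"
        "\<Delta> (matrix_unit k k) $ k $ l = (d ** matrix_unit k k - matrix_unit k k ** d) $ k $ l"
      using weak_2_local_derivation_inner[OF w clinear_functional_entry] by blast
    then have "\<Delta> (diag_mat \<mu>) $ k $ l = d $ k $ l * (\<mu> l - \<mu> k)"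
      by (simp add: matrix_mult_diag_mat_right matrix_mult_diag_mat_left algebra_simps)
    moreover have "k \<noteq> l \<Longrightarrow> d $ k $ l = 0"
      using d(2) units by (simp add: matrix_mult_matrix_unit_right matrix_mult_matrix_unit_left)
    ultimately show ?thesis by auto
  qed
  then show ?thesis by (simp add: vec_eq_iff)
qed

lemma weak_2_local_derivation_weighted_column_zero:
  assumes w: "weak_2_local_derivation \<Delta>" and units: "\<forall>j. \<Delta> (matrix_unit j j) = 0"
    and column: "\<forall>i. x $ i $ m = 0" and \<alpha>: "\<forall>j. \<alpha> j \<noteq> 0"
  shows "(\<Sum>j\<in>UNIV. cnj (\<alpha> j) * \<Delta> x $ j $ m) = 0"
proof -
  define \<phi> where "\<phi> y = (\<Sum>j\<in>UNIV. cnj (\<alpha> j) * y $ j $ m)" for y :: "'a cmat"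
  txt \<open>With this \<open>\<mu>\<close>, every inner derivation takes the same \<open>\<phi>\<close>-value at \<open>x\<close> and at
    \<open>diag_mat \<mu>\<close>, and \<open>\<Delta>\<close> vanishes at the latter.\<close>
  define \<mu> where "\<mu> j = (\<Sum>i\<in>UNIV. cnj (\<alpha> i) * x $ i $ j) / cnj (\<alpha> j)" for j
  have \<mu>_m: "\<mu> m = 0"
    using column by (simp add: \<mu>_def)
  have \<mu>_weighted: "cnj (\<alpha> j) * \<mu> j = (\<Sum>i\<in>UNIV. cnj (\<alpha> i) * x $ i $ j)" for j
    using \<alpha> by (simp add: \<mu>_def)
  obtain d where d: "\<phi> (\<Delta> x) = \<phi> (d ** x - x ** d)"
      "\<phi> (\<Delta> (diag_mat \<mu>)) = \<phi> (d ** diag_mat \<mu> - diag_mat \<mu> ** d)"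
    using weak_2_local_derivation_inner[OF w clinear_functional_weighted_column]
    unfolding \<phi>_def by blast
  have "\<phi> (d ** x - x ** d) = - (\<Sum>j\<in>UNIV. \<Sum>i\<in>UNIV. cnj (\<alpha> j) * (x $ j $ i * d $ i $ m))"
    using column by (simp add: \<phi>_def matrix_mult_entry right_diff_distrib sum_distrib_left
        sum_subtractf sum_negf)
  also have "\<dots> = - (\<Sum>i\<in>UNIV. (\<Sum>j\<in>UNIV. cnj (\<alpha> j) * x $ j $ i) * d $ i $ m)"
    by (subst sum.swap) (simp add: sum_distrib_right mult.assoc)
  also have "\<dots> = \<phi> (d ** diag_mat \<mu> - diag_mat \<mu> ** d)"
    using \<mu>_m by (simp add: \<phi>_def \<mu>_weighted[symmetric] matrix_mult_diag_mat_right
        matrix_mult_diag_mat_left right_diff_distrib sum_subtractf sum_negf mult.assoc)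
  also have "\<dots> = 0"
    using d(2) weak_2_local_derivation_diag_mat_zero[OF w units] by (simp add: \<phi>_def)
  finally show ?thesis
    using d(1) by (simp add: \<phi>_def)
qed

lemma matrix_mult_diagonal_matrix_unit_eq_zero_iff:
  "A ** matrix_unit m m = 0 \<longleftrightarrow> (\<forall>i. A $ i $ m = 0)"
  by (auto simp: vec_eq_iff matrix_mult_matrix_unit_right)

lemma weak_2_local_derivation_column_zero:
  assumes w: "weak_2_local_derivation \<Delta>" and units: "\<forall>j. \<Delta> (matrix_unit j j) = 0"
    and column: "x ** matrix_unit m m = 0"
  shows "\<Delta> x ** matrix_unit m m = 0"
proof -
  have "\<Delta> x $ k $ m = 0" for k
  proof -
    note weighted = weak_2_local_derivation_weighted_column_zero[OF w units
        column[unfolded matrix_mult_diagonal_matrix_unit_eq_zero_iff]]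
    have "(\<Sum>j\<in>UNIV. cnj (if j = k then 2 else 1) * \<Delta> x $ j $ m)
        - (\<Sum>j\<in>UNIV. cnj 1 * \<Delta> x $ j $ m) = 0"
      using weighted[of "\<lambda>j. if j = k then 2 else 1"] weighted[of "\<lambda>_. 1"] by simp
    also have "(\<Sum>j\<in>UNIV. cnj (if j = k then 2 else 1) * \<Delta> x $ j $ m)
        - (\<Sum>j\<in>UNIV. cnj 1 * \<Delta> x $ j $ m) = (\<Sum>j\<in>UNIV. if j = k then \<Delta> x $ j $ m else 0)"
      by (simp only: sum_subtractf[symmetric]) (rule sum.cong, auto)
    finally show ?thesis by simp
  qed
  then show ?thesis
    by (simp add: matrix_mult_diagonal_matrix_unit_eq_zero_iff)
qed

subsection \<open>Orthogonal minimal projections\<close>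

definition cvec_inner :: "complex ^ 'n::finite \<Rightarrow> complex ^ 'n \<Rightarrow> complex" where
  "cvec_inner u w = (\<Sum>t\<in>UNIV. cnj (u $ t) * w $ t)"

definition cvec_outer :: "complex ^ 'n \<Rightarrow> complex ^ 'n \<Rightarrow> 'n::finite cmat" where
  "cvec_outer u w = (\<chi> r s. u $ r * cnj (w $ s))"

lemma cvec_outer_entry [simp]: "cvec_outer u w $ r $ s = u $ r * cnj (w $ s)"
  by (simp add: cvec_outer_def)

lemma cvec_outer_mult:
  "cvec_outer a b ** cvec_outer c e = cscale (cvec_inner b c) (cvec_outer a e)"
  by (simp add: vec_eq_iff matrix_mult_entry cvec_inner_def sum_distrib_left
      sum_distrib_right mult_ac)

lemma cvec_inner_self: "cvec_inner v v = of_real (\<Sum>t\<in>UNIV. (cmod (v $ t))\<^sup>2)"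
proof -
  have "cnj z * z = of_real ((cmod z)\<^sup>2)" for z
    by (metis complex_norm_square mult.commute)
  then show ?thesis
    unfolding cvec_inner_def of_real_sum by (simp only:)
qed

lemma cvec_inner_self_pos:
  assumes "v \<noteq> 0"
  shows "(\<Sum>t\<in>UNIV. (cmod (v $ t))\<^sup>2) > 0"
proof -
  obtain i where "v $ i \<noteq> 0"
    using assms by (auto simp: vec_eq_iff)
  then show ?thesis
    by (intro sum_pos2[of UNIV i]) auto
qed

lemma cvec_inner_self_eq_one_nonzero_entry: "cvec_inner u u = 1 \<Longrightarrow> \<exists>r. u $ r \<noteq> 0"
  by (rule ccontr) (simp add: cvec_inner_def)

lemma cvec_outer_normalize:
  assumes "v \<noteq> 0"
  shows "\<exists>u. cvec_inner u u = 1 \<and> cscale (1 / cvec_inner v v) (cvec_outer v v) = cvec_outer u u"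
proof -
  define N where "N = (\<Sum>t\<in>UNIV. (cmod (v $ t))\<^sup>2)"
  have N: "N > 0"
    using cvec_inner_self_pos[OF assms] by (simp add: N_def)
  define c :: complex where "c = of_real (sqrt N)"
  have c: "cnj c = c" "c * c = cvec_inner v v" "c \<noteq> 0"
    using N by (simp_all add: c_def cvec_inner_self N_def flip: of_real_mult)
  have "cvec_inner v v \<noteq> 0"
    using c(2,3) by (metis mult_eq_0_iff)
  define u where "u = (\<chi> t. v $ t / c)"
  have "cvec_inner u u = cvec_inner v v / (c * c)"
    by (simp add: cvec_inner_def u_def c(1) sum_divide_distrib times_divide_times_eq)
  moreover have "cscale (1 / cvec_inner v v) (cvec_outer v v) = cvec_outer u u"
    by (simp add: vec_eq_iff u_def c(1,2) times_divide_times_eq)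
  ultimately show ?thesis
    using c \<open>cvec_inner v v \<noteq> 0\<close> by auto
qed

lemma projection_column_outer_below:
  assumes "is_projection p"
  shows "cvec_outer (\<chi> t. p $ t $ s) (\<chi> t. p $ t $ s) ** p = cvec_outer (\<chi> t. p $ t $ s) (\<chi> t. p $ t $ s)"
proof -
  have herm: "p $ t $ j = cnj (p $ j $ t)" for t j
    using arg_cong[where f="\<lambda>A. A $ t $ j", OF conjunct1[OF assms[unfolded is_projection_def]]]
    by simp
  have "(\<Sum>t\<in>UNIV. cnj (p $ t $ s) * p $ t $ j) = cnj ((p ** p) $ j $ s)" for j
    by (simp add: matrix_mult_entry herm[of _ j] mult.commute)
  then have "(\<Sum>t\<in>UNIV. cnj (p $ t $ s) * p $ t $ j) = cnj (p $ j $ s)" for j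
    using assms by (simp add: is_projection_def)
  then show ?thesis
    by (simp add: vec_eq_iff matrix_mult_entry mult.assoc sum_distrib_left[symmetric])
qed

lemma minimal_projection_rank_one:
  assumes "minimal_projection p"
  shows "\<exists>u. cvec_inner u u = 1 \<and> p = cvec_outer u u"
proof -
  have proj: "is_projection p" and "p \<noteq> 0"
    using assms by (auto simp: minimal_projection_def)
  then obtain r s where "p $ r $ s \<noteq> 0"
    by (metis vec_eq_iff zero_index)
  define v where "v = (\<chi> t. p $ t $ s)"
  have "v \<noteq> 0"
    using \<open>p $ r $ s \<noteq> 0\<close> by (auto simp: v_def vec_eq_iff)
  then obtain u where u: "cvec_inner u u = 1"
      and e: "cscale (1 / cvec_inner v v) (cvec_outer v v) = cvec_outer u u"
    using cvec_outer_normalize by blast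
  define e where "e = cvec_outer u u"
  have "e ** p = e"
    using projection_column_outer_below[OF proj, of s] e[symmetric]
    by (simp add: e_def v_def cscale_matrix_mult_left)
  moreover have "is_projection e"
    using u by (simp add: is_projection_def e_def cvec_outer_mult)
      (simp add: vec_eq_iff mult.commute)
  moreover have "e \<noteq> 0"
  proof -
    obtain r where "u $ r \<noteq> 0"
      using cvec_inner_self_eq_one_nonzero_entry[OF u] by blast
    then have "e $ r $ r \<noteq> 0"
      by (simp add: e_def)
    then show ?thesis by auto
  qed
  ultimately have "e = p"
    using assms by (auto simp: minimal_projection_def)
  then show ?thesis
    using u e_def by blast
qed

lemma cvec_inner_eq_zero_if_outer_orthogonal:
  assumes "cvec_inner a a = 1" "cvec_inner b b = 1"
    and "cvec_outer a a ** cvec_outer b b = (0::'n::finite cmat)"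
  shows "cvec_inner a b = 0"
proof -
  obtain r s where "a $ r \<noteq> 0" "b $ s \<noteq> 0"
    using cvec_inner_self_eq_one_nonzero_entry assms(1,2) by blast
  moreover have "cscale (cvec_inner a b) (cvec_outer a b) $ r $ s = 0"
    using assms(3) by (simp add: cvec_outer_mult)
  ultimately show ?thesis by simp
qed

lemma orthogonal_minimal_projections_unitary_diagonal:
  fixes p :: "'n::finite \<Rightarrow> 'n cmat"
  assumes minimal: "\<forall>j. minimal_projection (p j)"
    and orthogonal: "\<forall>i j. i \<noteq> j \<longrightarrow> p i ** p j = 0"
  shows "\<exists>U. cadj U ** U = mat 1 \<and> U ** cadj U = mat 1
            \<and> (\<forall>j. p j = U ** matrix_unit j j ** cadj U)"
proof -
  obtain u where u: "\<And>j. cvec_inner (u j) (u j) = 1 \<and> p j = cvec_outer (u j) (u j)"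
    using choice[of "\<lambda>j v. cvec_inner v v = 1 \<and> p j = cvec_outer v v"]
      minimal_projection_rank_one minimal by blast
  define U :: "'n cmat" where "U = (\<chi> r j. u j $ r)"
  have "cvec_inner (u i) (u j) = (if i = j then 1 else 0)" for i j
  proof (cases "i = j")
    case False
    then have "cvec_outer (u i) (u i) ** cvec_outer (u j) (u j) = 0"
      using orthogonal u by metis
    then show ?thesis
      using False u cvec_inner_eq_zero_if_outer_orthogonal by auto
  qed (use u in auto)
  then have left_inverse: "cadj U ** U = mat 1"
    by (simp add: vec_eq_iff matrix_mult_entry mat_def U_def cvec_inner_def)
  moreover have "U ** matrix_unit j j ** cadj U = cvec_outer (u j) (u j)" for j
  proof -
    have "(U ** matrix_unit j j ** cadj U) $ r $ s
        = (\<Sum>k\<in>UNIV. (if k = j then U $ r $ j else 0) * cnj (U $ s $ k))" for r s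
      by (simp only: matrix_mult_entry[of "U ** matrix_unit j j"]
          matrix_mult_matrix_unit_right cadj_entry)
    then show ?thesis
      by (simp add: vec_eq_iff if_zero_mult U_def)
  qed
  ultimately show ?thesis
    using u matrix_left_right_inverse1[OF left_inverse] by auto
qed

lemma weak_2_local_derivation_unitary_conj:
  assumes w: "weak_2_local_derivation \<Delta>"
    and left_inverse: "cadj U ** U = mat 1" and right_inverse: "U ** cadj U = mat 1"
  shows "weak_2_local_derivation (\<lambda>a. cadj U ** \<Delta> (U ** a ** cadj U) ** U)"
  unfolding weak_2_local_derivation_def
proof (intro allI impI)
  fix a b :: "'a cmat" and \<phi> :: "'a cmat \<Rightarrow> complex"
  assume \<phi>: "clinear_functional \<phi>"
  define conj :: "'a cmat \<Rightarrow> 'a cmat" where "conj y = cadj U ** y ** U" for y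
  have "clinear_functional (\<lambda>y. \<phi> (conj y))"
    using \<phi> by (simp add: conj_def clinear_functional_def matrix_add_ldistrib
        matrix_add_rdistrib cscale_matrix_mult_left cscale_matrix_mult_right)
  then obtain D where D: "is_derivation D"
      "\<phi> (conj (\<Delta> (U ** a ** cadj U))) = \<phi> (conj (D (U ** a ** cadj U)))"
      "\<phi> (conj (\<Delta> (U ** b ** cadj U))) = \<phi> (conj (D (U ** b ** cadj U)))"
    using w unfolding weak_2_local_derivation_def by blast
  define D' where "D' x = conj (D (U ** x ** cadj U))" for x
  have "is_derivation D'"
    unfolding is_derivation_def clinear_mat_map_def
  proof (intro conjI allI)
    fix x y :: "'a cmat" and c
    show "D' (x + y) = D' x + D' y"
      by (simp add: D'_def conj_def matrix_add_ldistrib matrix_add_rdistrib derivation_add[OF D(1)])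
    show "D' (cscale c x) = cscale c (D' x)"
      by (simp add: D'_def conj_def cscale_matrix_mult_left cscale_matrix_mult_right
          derivation_cscale[OF D(1)])
    have cancel: "A ** cadj U ** U = A" for A :: "'a cmat"
      by (simp add: matrix_mul_assoc[symmetric] left_inverse)
    have "U ** (x ** y) ** cadj U = (U ** x ** cadj U) ** (U ** y ** cadj U)"
      by (simp add: matrix_mul_assoc cancel)
    then have "D' (x ** y) = conj (D (U ** x ** cadj U) ** (U ** y ** cadj U)
        + (U ** x ** cadj U) ** D (U ** y ** cadj U))"
      by (simp add: D'_def derivation_mult[OF D(1)])
    also have "\<dots> = D' x ** y + x ** D' y"
      by (simp add: D'_def conj_def matrix_add_ldistrib matrix_add_rdistrib matrix_mul_assoc
          cancel left_inverse)
    finally show "D' (x ** y) = D' x ** y + x ** D' y" .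
  qed
  then show "\<exists>D. is_derivation D
      \<and> \<phi> (cadj U ** \<Delta> (U ** a ** cadj U) ** U) = \<phi> (D a)
      \<and> \<phi> (cadj U ** \<Delta> (U ** b ** cadj U) ** U) = \<phi> (D b)"
    using D(2,3) unfolding D'_def conj_def by blast
qed

lemma matrix_conj_cancel:
  assumes "V ** U = mat 1" "W ** X = mat 1"
  shows "V ** (U ** A ** W) ** X = (A::'n::finite cmat)"
  by (simp add: matrix_mul_assoc assms) (simp add: matrix_mul_assoc[symmetric] assms)

lemma weak_2_local_derivation_annihilates_right:
  fixes p :: "'n::finite \<Rightarrow> 'n cmat"
  assumes w: "weak_2_local_derivation \<Delta>"
    and minimal: "\<forall>j. minimal_projection (p j)"
    and orthogonal: "\<forall>i j. i \<noteq> j \<longrightarrow> p i ** p j = 0"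
    and vanish: "\<forall>j. \<Delta> (p j) = 0"
    and annihilated: "x ** p m = 0"
  shows "\<Delta> x ** p m = 0"
proof -
  obtain U where left_inverse: "cadj U ** U = mat 1" and right_inverse: "U ** cadj U = mat 1"
    and p: "\<And>j. p j = U ** matrix_unit j j ** cadj U"
    using orthogonal_minimal_projections_unitary_diagonal[OF minimal orthogonal] by blast
  define \<Delta>' where "\<Delta>' a = cadj U ** \<Delta> (U ** a ** cadj U) ** U" for a
  have w': "weak_2_local_derivation \<Delta>'"
    unfolding \<Delta>'_def[abs_def]
    by (rule weak_2_local_derivation_unitary_conj[OF w left_inverse right_inverse])
  have units: "\<forall>j. \<Delta>' (matrix_unit j j) = 0"
    using vanish by (simp add: \<Delta>'_def p)
  define x' where "x' = cadj U ** x ** U"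
  have "U ** (x' ** matrix_unit m m) ** cadj U
      = (U ** cadj U) ** x ** (U ** matrix_unit m m ** cadj U)"
    by (simp add: x'_def matrix_mul_assoc)
  then have "U ** (x' ** matrix_unit m m) ** cadj U = x ** p m"
    by (simp add: right_inverse p)
  then have "x' ** matrix_unit m m = 0"
    using annihilated matrix_conj_cancel[OF left_inverse left_inverse, of "x' ** matrix_unit m m"]
    by simp
  then have "\<Delta>' x' ** matrix_unit m m = 0"
    by (rule weak_2_local_derivation_column_zero[OF w' units])
  moreover have "U ** (\<Delta>' x' ** matrix_unit m m) ** cadj U
      = (U ** cadj U) ** \<Delta> x ** (U ** matrix_unit m m ** cadj U)"
    by (simp add: \<Delta>'_def x'_def matrix_conj_cancel[OF right_inverse right_inverse])
      (simp add: matrix_mul_assoc)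
  ultimately show ?thesis
    by (simp add: right_inverse p)
qed

lemma symmetric_annihilates_left:
  assumes symmetric: "\<forall>a. cadj (\<Delta> (cadj a)) = \<Delta> a"
    and right: "\<And>y. y ** p = 0 \<Longrightarrow> \<Delta> y ** p = 0"
    and hermitian: "cadj p = p" and annihilated: "p ** x = 0"
  shows "p ** \<Delta> x = 0"
proof -
  have "cadj x ** p = 0"
    using cadj_mult[of p x] by (simp add: annihilated hermitian)
  then have "cadj (\<Delta> (cadj x) ** p) = 0"
    using right by simp
  then show ?thesis
    by (simp add: cadj_mult hermitian symmetric)
qed

theorem lemma2p2:
  fixes \<Delta> :: "'n::finite cmat \<Rightarrow> 'n cmat"
    and p :: "'n \<Rightarrow> 'n cmat"
    and m :: 'n
  assumes "weak_2_local_derivation \<Delta>"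
    and "\<forall>a. cadj (\<Delta> (cadj a)) = \<Delta> a"
    and "\<forall>j. minimal_projection (p j)"
    and "\<forall>i j. i \<noteq> j \<longrightarrow> p i ** p j = 0"
    and "\<forall>j. \<Delta> (p j) = 0"
  shows "\<forall>a. (mat 1 - p m) ** \<Delta> ((mat 1 - p m) ** a ** (mat 1 - p m)) ** p m = 0
           \<and> p m ** \<Delta> ((mat 1 - p m) ** a ** (mat 1 - p m)) ** (mat 1 - p m) = 0"
proof
  fix a
  define q where "q = mat 1 - p m"
  have hermitian: "cadj (p m) = p m" and idempotent: "p m ** p m = p m"
    using assms(3) by (simp_all add: minimal_projection_def is_projection_def)
  have "q ** p m = 0" "p m ** q = 0"
    using idempotent by (simp_all add: q_def matrix_diff_rdistrib matrix_diff_ldistrib)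
  moreover have "(q ** a ** q) ** p m = (q ** a) ** (q ** p m)"
      "p m ** (q ** a ** q) = (p m ** q) ** (a ** q)"
    by (simp_all add: matrix_mul_assoc)
  ultimately have "(q ** a ** q) ** p m = 0" "p m ** (q ** a ** q) = 0"
    by simp_all
  note right = weak_2_local_derivation_annihilates_right[OF assms(1,3,4,5)]
  have "\<Delta> (q ** a ** q) ** p m = 0" "p m ** \<Delta> (q ** a ** q) = 0"
    using right \<open>(q ** a ** q) ** p m = 0\<close>
      symmetric_annihilates_left[OF assms(2) right hermitian \<open>p m ** (q ** a ** q) = 0\<close>]
    by simp_all
  then show "(mat 1 - p m) ** \<Delta> ((mat 1 - p m) ** a ** (mat 1 - p m)) ** p m = 0
           \<and> p m ** \<Delta> ((mat 1 - p m) ** a ** (mat 1 - p m)) ** (mat 1 - p m) = 0"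
    unfolding q_def[symmetric] by (simp add: matrix_mul_assoc[of q, symmetric])
qed

end
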